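(* Let $G$ be a group and $\mathcal{S}$ a 2-complex with vertices in $G$ such that $\mathcal{C}=Sc[\mathcal{S},G]$ is a commutative triplet structure. Then for every $g\in G$ the link of $g$ in $\mathcal{C}$ is isomorphic to the graph $G_{link}$ with vertex set $\{xy^{-1}:\{x,y\}\in\mathcal{T}\}$ in which $ac^{-1}\sim bc^{-1}$ for every triangle $\{a,b,c\}$ of $\mathcal{S}$ (for every labelling of its vertices).
   Context: For $\sigma\subseteq G$, $\sigma\cdot g=\{sg:s\in\sigma\}$; $Sc[\mathcal{S},G]=\{\sigma\cdot g:\sigma\in\mathcal{S},g\in G\}$. The link of a vertex $v$ of $\mathcal{C}$ is the graph with edge set $\{\sigma\setminus\{v\}:\sigma \text{ a triangle of }\mathcal{C},\ v\in\sigma\}$. $\mathcal{T}=\mathcal{S}(1)$ (2-sets contained in triangles of $\mathcal{S}$), $\mathcal{T}_o$ = ordered pairs $(t_1,t_2)$ with $\{t_1,t_2\}\in\mathcal{T}$. Commutative triplet structure: (0) $\{s,s^{-1}\}\notin\mathcal{T}$ for every vertex $s$; (A) every edge of $\mathcal{T}$ lies in exactly $\tilde d$ triangles of $\mathcal{S}$; (B) $ab=ba$ for $\{a,b\}\in\mathcal{T}$; (C) $\{a,b\}\in\mathcal{T}\iff\{a^{-1},b^{-1}\}\in\mathcal{T}$; (D) for $t\ne t'\in\mathcal{T}_o$, $t_1t_2^{-1}=t'_1(t'_2)^{-1}$ implies $t'_2=t_1^{-1}$, $t'_1=t_2^{-1}$; (E) the 1-skeleton of $\mathcal{S}$ is connected.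 *)

theory Defs
  imports "HOL-Algebra.Group"
begin

text \<open>A 2-complex with vertices in a group is modelled by its set of triangles
  (3-element subsets of the carrier).\<close>

definition right_translate :: "('a, 'b) monoid_scheme \<Rightarrow> 'a set \<Rightarrow> 'a \<Rightarrow> 'a set" where
  "right_translate G \<sigma> g = (\<lambda>s. s \<otimes>\<^bsub>G\<^esub> g) ` \<sigma>"

definition Sc :: "('a, 'b) monoid_scheme \<Rightarrow> 'a set set \<Rightarrow> 'a set set" where
  "Sc G S = {right_translate G \<sigma> g | \<sigma> g. \<sigma> \<in> S \<and> g \<in> carrier G}"

definition is_2complex :: "('a, 'b) monoid_scheme \<Rightarrow> 'a set set \<Rightarrow> bool" where
  "is_2complex G S \<longleftrightarrow> (\<forall>\<sigma>\<in>S. \<sigma> \<subseteq> carrier G \<and> card \<sigma> = 3)"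

definition vertices :: "'a set set \<Rightarrow> 'a set" where
  "vertices S = \<Union> S"

text \<open>T = S(1): the 2-sets contained in triangles of S.\<close>
definition edges1 :: "'a set set \<Rightarrow> 'a set set" where
  "edges1 S = {e. card e = 2 \<and> (\<exists>\<sigma>\<in>S. e \<subseteq> \<sigma>)}"

definition ordered_edges :: "'a set set \<Rightarrow> ('a \<times> 'a) set" where
  "ordered_edges S = {(a, b). {a, b} \<in> edges1 S}"

definition comm_triplet_structure :: "('a, 'b) monoid_scheme \<Rightarrow> 'a set set \<Rightarrow> nat \<Rightarrow> bool" where
  "comm_triplet_structure G S d \<longleftrightarrow>
     \<comment> \<open>(0)\<close>
     (\<forall>s\<in>vertices S. {s, inv\<^bsub>G\<^esub> s} \<notin> edges1 S) \<and>
     \<comment> \<open>(A)\<close>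
     (\<forall>e\<in>edges1 S. finite {\<sigma>\<in>S. e \<subseteq> \<sigma>} \<and> card {\<sigma>\<in>S. e \<subseteq> \<sigma>} = d) \<and>
     \<comment> \<open>(B)\<close>
     (\<forall>a b. {a, b} \<in> edges1 S \<longrightarrow> a \<otimes>\<^bsub>G\<^esub> b = b \<otimes>\<^bsub>G\<^esub> a) \<and>
     \<comment> \<open>(C)\<close>
     (\<forall>a\<in>carrier G. \<forall>b\<in>carrier G. {a, b} \<in> edges1 S \<longleftrightarrow> {inv\<^bsub>G\<^esub> a, inv\<^bsub>G\<^esub> b} \<in> edges1 S) \<and>
     \<comment> \<open>(D)\<close>
     (\<forall>t\<in>ordered_edges S. \<forall>t'\<in>ordered_edges S. t \<noteq> t' \<longrightarrow>
        fst t \<otimes>\<^bsub>G\<^esub> inv\<^bsub>G\<^esub> (snd t) = fst t' \<otimes>\<^bsub>G\<^esub> inv\<^bsub>G\<^esub> (snd t') \<longrightarrow>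
        snd t' = inv\<^bsub>G\<^esub> (fst t) \<and> fst t' = inv\<^bsub>G\<^esub> (snd t)) \<and>
     \<comment> \<open>(E): the 1-skeleton (vertices of S, edges T) is connected\<close>
     (\<forall>x\<in>vertices S. \<forall>y\<in>vertices S. (x, y) \<in> (ordered_edges S)\<^sup>*)"

text \<open>Simple graphs as pairs (vertex set, set of 2-element edges).\<close>
definition graph_iso :: "'a set \<times> 'a set set \<Rightarrow> 'c set \<times> 'c set set \<Rightarrow> bool" where
  "graph_iso G1 G2 \<longleftrightarrow> (\<exists>f. bij_betw f (fst G1) (fst G2) \<and>
      (\<forall>u\<in>fst G1. \<forall>v\<in>fst G1. {u, v} \<in> snd G1 \<longleftrightarrow> {f u, f v} \<in> snd G2))"

definition link :: "'a set set \<Rightarrow> 'a \<Rightarrow> 'a set \<times> 'a set set" where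
  "link C v = (let E = {\<sigma> - {v} | \<sigma>. \<sigma> \<in> C \<and> v \<in> \<sigma>} in (\<Union> E, E))"

definition G_link :: "('a, 'b) monoid_scheme \<Rightarrow> 'a set set \<Rightarrow> 'a set \<times> 'a set set" where
  "G_link G S =
     ({x \<otimes>\<^bsub>G\<^esub> inv\<^bsub>G\<^esub> y | x y. {x, y} \<in> edges1 S},
      {{a \<otimes>\<^bsub>G\<^esub> inv\<^bsub>G\<^esub> c, b \<otimes>\<^bsub>G\<^esub> inv\<^bsub>G\<^esub> c} | a b c.
          {a, b, c} \<in> S \<and> a \<noteq> b \<and> b \<noteq> c \<and> a \<noteq> c})"

end

theory Submission
  imports Defs
begin

text \<open>Right multiplication by \<open>g\<inverse>\<close> maps the link of \<open>g\<close> in \<open>Sc[S, G]\<close> isomorphically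
  onto the graph of the edges \<open>(\<sigma> - {c}) c\<inverse>\<close> for triangles \<open>\<sigma>\<close> of \<open>S\<close> and vertices
  \<open>c \<in> \<sigma>\<close>: a triangle \<open>\<sigma> h\<close> of \<open>Sc[S, G]\<close> passes through \<open>g\<close> exactly when \<open>g = c h\<close>
  for some \<open>c \<in> \<sigma>\<close>, and then its link edge \<open>(\<sigma> - {c}) h\<close> is sent to \<open>(\<sigma> - {c}) c\<inverse>\<close>.
  Since triangles have three vertices, these are precisely the edges of \<open>G_link\<close>, whose
  vertices are the end points of its edges.\<close>

lemma graph_iso_image_edges:
  assumes "inj_on f (\<Union>E)"
  shows "graph_iso (\<Union>E, E) (\<Union>((`) f ` E), (`) f ` E)"
proof -
  have bij: "bij_betw f (\<Union>E) (\<Union>((`) f ` E))"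
    using assms by (auto simp: bij_betw_def)
  have "{u, v} \<in> E \<longleftrightarrow> {f u, f v} \<in> (`) f ` E" if "u \<in> \<Union>E" "v \<in> \<Union>E" for u v
  proof
    assume "{f u, f v} \<in> (`) f ` E"
    then obtain e where e: "e \<in> E" "f ` {u, v} = f ` e" by auto
    then have "{u, v} = e"
      using that inj_on_image_eq_iff[OF assms] by (metis Sup_upper empty_subsetI insert_subset)
    with e show "{u, v} \<in> E" by simp
  qed (metis image_empty image_eqI image_insert)
  with bij show ?thesis unfolding graph_iso_def by auto
qed

lemma card_3_obtain_other_elements:
  assumes "card \<sigma> = 3" "c \<in> \<sigma>"
  obtains a b where "\<sigma> = {a, b, c}" "a \<noteq> b" "b \<noteq> c" "a \<noteq> c"
proof -
  have "card (\<sigma> - {c}) = 2" using assms by simp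
  then obtain a b where "\<sigma> - {c} = {a, b}" "a \<noteq> b" by (auto simp: card_2_iff)
  with assms(2) that show ?thesis by blast
qed

lemma edges1_insert_iff: "{x, y} \<in> edges1 S \<longleftrightarrow> x \<noteq> y \<and> (\<exists>\<sigma>\<in>S. x \<in> \<sigma> \<and> y \<in> \<sigma>)"
  by (cases "x = y") (auto simp: edges1_def)

lemma link_eq_Union_edges: "link C v = (\<Union>(snd (link C v)), snd (link C v))"
  by (simp add: link_def Let_def)

text \<open>The edge \<open>(\<sigma> - {c}) c\<inverse>\<close> of the link of \<open>\<one>\<close> in \<open>Sc[S, G]\<close> contributed by the
  triangle \<open>\<sigma> c\<inverse>\<close>.\<close>

definition pointed_edges :: "('a, 'b) monoid_scheme \<Rightarrow> 'a set set \<Rightarrow> 'a set set" where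
  "pointed_edges G S = {(\<lambda>v. v \<otimes>\<^bsub>G\<^esub> inv\<^bsub>G\<^esub> c) ` (\<sigma> - {c}) | \<sigma> c. \<sigma> \<in> S \<and> c \<in> \<sigma>}"

lemma (in group) normalize_right_translate_Diff:
  assumes "\<sigma> \<subseteq> carrier G" "h \<in> carrier G" "c \<in> \<sigma>"
  shows "(\<lambda>v. v \<otimes> inv (c \<otimes> h)) ` (right_translate G \<sigma> h - {c \<otimes> h})
           = (\<lambda>v. v \<otimes> inv c) ` (\<sigma> - {c})"
proof -
  have "right_translate G \<sigma> h - {c \<otimes> h} = (\<lambda>v. v \<otimes> h) ` (\<sigma> - {c})"
    using assms by (auto simp: right_translate_def subset_iff)
  moreover have "v \<otimes> h \<otimes> inv (c \<otimes> h) = v \<otimes> inv c" if "v \<in> carrier G" for v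
  proof -
    have "c \<in> carrier G" using assms by auto
    then show ?thesis
      using that assms(2) by (simp add: inv_mult_group m_assoc[symmetric], simp add: m_assoc)
  qed
  ultimately show ?thesis
    using assms(1) by (auto simp: image_image subset_iff intro!: image_cong)
qed

lemma (in group) normalized_link_Sc:
  assumes "\<forall>\<sigma>\<in>S. \<sigma> \<subseteq> carrier G" "g \<in> carrier G"
  shows "(`) (\<lambda>v. v \<otimes> inv g) ` snd (link (Sc G S) g) = pointed_edges G S"
    (is "?L = _")
proof
  show "?L \<subseteq> pointed_edges G S"
  proof
    fix e assume "e \<in> ?L"
    then obtain \<sigma> h where \<sigma>: "\<sigma> \<in> S" "h \<in> carrier G" "g \<in> right_translate G \<sigma> h"
      and e: "e = (\<lambda>v. v \<otimes> inv g) ` (right_translate G \<sigma> h - {g})"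
      by (auto simp: link_def Let_def Sc_def)
    then obtain c where c: "c \<in> \<sigma>" "g = c \<otimes> h"
      by (auto simp: right_translate_def)
    have "e = (\<lambda>v. v \<otimes> inv c) ` (\<sigma> - {c})"
      using e c normalize_right_translate_Diff[of \<sigma> h c] assms(1) \<sigma>(1,2) by simp
    with \<sigma> c show "e \<in> pointed_edges G S" by (auto simp: pointed_edges_def)
  qed
  show "pointed_edges G S \<subseteq> ?L"
  proof
    fix e assume "e \<in> pointed_edges G S"
    then obtain \<sigma> c where \<sigma>: "\<sigma> \<in> S" "c \<in> \<sigma>" and e: "e = (\<lambda>v. v \<otimes> inv c) ` (\<sigma> - {c})"
      by (auto simp: pointed_edges_def)
    define h where "h = inv c \<otimes> g"
    have "c \<in> carrier G" using assms(1) \<sigma> by auto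
    then have h: "h \<in> carrier G" and g: "g = c \<otimes> h"
      using assms(2) by (simp_all add: h_def m_assoc[symmetric])
    have "e = (\<lambda>v. v \<otimes> inv g) ` (right_translate G \<sigma> h - {g})"
      using e g normalize_right_translate_Diff[OF _ h \<sigma>(2)] assms(1) \<sigma>(1) by simp
    moreover have "right_translate G \<sigma> h \<in> Sc G S" "g \<in> right_translate G \<sigma> h"
      using \<sigma> h g by (auto simp: Sc_def right_translate_def)
    ultimately show "e \<in> ?L" by (auto simp: link_def Let_def)
  qed
qed

lemma G_link_edges_eq_pointed_edges:
  assumes "is_2complex G S"
  shows "snd (G_link G S) = pointed_edges G S"
proof
  show "snd (G_link G S) \<subseteq> pointed_edges G S"
  proof
    fix e assume "e \<in> snd (G_link G S)"
    then obtain a b c where e: "e = {a \<otimes>\<^bsub>G\<^esub> inv\<^bsub>G\<^esub> c, b \<otimes>\<^bsub>G\<^esub> inv\<^bsub>G\<^esub> c}"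
      and abc: "{a, b, c} \<in> S" "b \<noteq> c" "a \<noteq> c"
      by (auto simp: G_link_def)
    then have "e = (\<lambda>v. v \<otimes>\<^bsub>G\<^esub> inv\<^bsub>G\<^esub> c) ` ({a, b, c} - {c})"
      by auto
    with abc(1) show "e \<in> pointed_edges G S" unfolding pointed_edges_def by blast
  qed
  show "pointed_edges G S \<subseteq> snd (G_link G S)"
  proof
    fix e assume "e \<in> pointed_edges G S"
    then obtain \<sigma> c where \<sigma>: "\<sigma> \<in> S" "c \<in> \<sigma>"
      and e: "e = (\<lambda>v. v \<otimes>\<^bsub>G\<^esub> inv\<^bsub>G\<^esub> c) ` (\<sigma> - {c})"
      by (auto simp: pointed_edges_def)
    have "card \<sigma> = 3" using assms \<sigma> by (simp add: is_2complex_def)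
    then obtain a b where abc: "\<sigma> = {a, b, c}" "a \<noteq> b" "b \<noteq> c" "a \<noteq> c"
      using \<sigma>(2) by (rule card_3_obtain_other_elements)
    then have "e = {a \<otimes>\<^bsub>G\<^esub> inv\<^bsub>G\<^esub> c, b \<otimes>\<^bsub>G\<^esub> inv\<^bsub>G\<^esub> c}"
      using e by auto
    with abc \<sigma>(1) show "e \<in> snd (G_link G S)"
      unfolding G_link_def snd_conv by blast
  qed
qed

lemma G_link_vertices_eq_Union_edges:
  assumes "is_2complex G S"
  shows "fst (G_link G S) = \<Union>(snd (G_link G S))"
proof -
  have "fst (G_link G S) = {v \<otimes>\<^bsub>G\<^esub> inv\<^bsub>G\<^esub> c | v c. v \<noteq> c \<and> (\<exists>\<sigma>\<in>S. v \<in> \<sigma> \<and> c \<in> \<sigma>)}"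
    by (simp add: G_link_def edges1_insert_iff)
  also have "\<dots> = \<Union>(pointed_edges G S)"
    unfolding pointed_edges_def by blast
  finally show ?thesis
    using G_link_edges_eq_pointed_edges[OF assms] by simp
qed

theorem mainTheorem8:
  fixes G (structure) and S :: "'a set set" and d :: nat
  assumes "group G"
    and "is_2complex G S"
    and "comm_triplet_structure G S d"
    and "g \<in> carrier G"
  shows "graph_iso (link (Sc G S) g) (G_link G S)"
proof -
  interpret group G by (rule assms(1))
  define E where "E = snd (link (Sc G S) g)"
  define f where "f = (\<lambda>v. v \<otimes> inv g)"
  have car: "\<forall>\<sigma>\<in>S. \<sigma> \<subseteq> carrier G" using assms(2) by (simp add: is_2complex_def)
  have "\<Union>E \<subseteq> carrier G"
    using car by (auto simp: E_def link_def Let_def Sc_def right_translate_def)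
  moreover have "inj_on f (carrier G)"
    using assms(4) by (simp add: f_def inj_on_def)
  ultimately have "inj_on f (\<Union>E)"
    by (rule inj_on_subset[rotated])
  moreover have "G_link G S = (\<Union>((`) f ` E), (`) f ` E)"
    using G_link_vertices_eq_Union_edges[OF assms(2)] G_link_edges_eq_pointed_edges[OF assms(2)]
      normalized_link_Sc[OF car assms(4)]
    by (simp add: E_def f_def prod_eq_iff)
  ultimately show ?thesis
    using graph_iso_image_edges link_eq_Union_edges unfolding E_def by metis
qed

end
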